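(* Let $N(r)\in\mathbb{R}[[r]]$, $r\in\mathbb{R}^d$, be a formal power series which is non-degenerate, i.e. there is no unit vector $\gamma\in\mathbb{R}^d$ with $\langle\partial_rN(r),\gamma\rangle=0$ as a formal series. Then there exist $p\in\mathbb{N}$ and $\sigma>0$ such that for every $k\in\mathbb{Z}^d\setminus\{0\}$ there is a unit vector $u_k\in\mathbb{R}^d$ for which the series $f_k(r)=\langle k/|k|,\partial_rN(r)\rangle$ satisfies $\max_{0\le j\le p}\left|\partial_t^j f_k(tu_k)\big|_{t=0}\right|\ge\sigma$.
   Context: For a formal series $f\in\mathbb{R}[[r]]$ and $u\in\mathbb{R}^d$, $\partial_t^jf(tu)|_{t=0}$ is $j!$ times the coefficient of $t^j$ in the formal series $t\mapsto f(tu)$. *)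

theory Defs
  imports "HOL-Analysis.Analysis"
begin

text \<open>A formal power series in d real variables r = (r_i), i of finite type 'd, is
represented by its coefficient function: N alpha is the coefficient of the monomial
r^alpha = prod_i r_i^(alpha i), for multi-indices alpha :: 'd => nat.\<close>

type_synonym 'd mfps = "('d \<Rightarrow> nat) \<Rightarrow> real"

text \<open>Coefficients of the formal series <gamma, d_r N(r)> = sum_i gamma_i * d N / d r_i.
The coefficient of r^alpha in d N / d r_i is (alpha i + 1) * N (alpha + e_i).\<close>
definition grad_pair :: "('d::finite) mfps \<Rightarrow> real^'d \<Rightarrow> 'd mfps" where
  "grad_pair N \<gamma> = (\<lambda>\<alpha>. \<Sum>i\<in>UNIV. \<gamma> $ i * real (\<alpha> i + 1) * N (\<alpha>(i := \<alpha> i + 1)))"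

text \<open>Coefficient of t^j in the formal series t |-> f(t u).\<close>
definition ray_coeff :: "('d::finite) mfps \<Rightarrow> real^'d \<Rightarrow> nat \<Rightarrow> real" where
  "ray_coeff f u j = (\<Sum>\<alpha>\<in>{\<alpha>::'d \<Rightarrow> nat. (\<Sum>i\<in>UNIV. \<alpha> i) = j}. f \<alpha> * (\<Prod>i\<in>UNIV. (u $ i) ^ (\<alpha> i)))"

text \<open>d_t^j f(t u) at t = 0, i.e. j! times the coefficient of t^j.\<close>
definition ray_deriv :: "('d::finite) mfps \<Rightarrow> real^'d \<Rightarrow> nat \<Rightarrow> real" where
  "ray_deriv f u j = fact j * ray_coeff f u j"

end

theory Submission
  imports Defs
begin

text \<open>For each unit vector \<gamma> the series \<langle>\<gamma>, d_r N\<rangle> is nonzero, so it has a nonzero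
coefficient; its homogeneous part of that degree j is a nonzero polynomial and therefore does
not vanish in some direction u, i.e. the j-th derivative of t \<mapsto> \<langle>\<gamma>, d_r N\<rangle>(t u) at 0 is
nonzero. This derivative depends continuously on \<gamma>, so it stays above half its value near \<gamma>.
Compactness of the unit sphere leaves finitely many pairs (u, j); p is the largest j and \<sigma> the
smallest half-value.\<close>

lemma polyfun_coeff_eq_0:
  fixes a :: "nat \<Rightarrow> 'a::{idom,real_normed_div_algebra}"
  assumes "finite M" and "\<forall>t. (\<Sum>n\<in>M. a n * t ^ n) = 0" and "n \<in> M"
  shows "a n = 0"
proof -
  define b where "b n = (if n \<in> M then a n else 0)" for n
  have "(\<Sum>n\<le>Max M. b n * t ^ n) = (\<Sum>n\<in>M. a n * t ^ n)" for t
    unfolding b_def using assms(1) by (intro sum.mono_neutral_cong_right) auto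
  then have "\<forall>m\<le>Max M. b m = 0"
    using assms(2) polyfun_eq_0[of b "Max M"] by simp
  moreover have "n \<le> Max M" using assms(1,3) by simp
  ultimately show ?thesis using assms(3) by (auto simp: b_def)
qed

lemma sum_monomials_group_by_exponent:
  fixes c :: "('d \<Rightarrow> nat) \<Rightarrow> 'a::comm_ring_1"
  assumes "finite I" and "i \<notin> I" and "finite S" and "finite M" and "(\<lambda>\<beta>. \<beta> i) ` S \<subseteq> M"
  shows "(\<Sum>\<beta>\<in>S. c \<beta> * (\<Prod>k\<in>insert i I. (x(i := t)) k ^ \<beta> k))
       = (\<Sum>n\<in>M. (\<Sum>\<beta>\<in>{\<beta>\<in>S. \<beta> i = n}. c \<beta> * (\<Prod>k\<in>I. x k ^ \<beta> k)) * t ^ n)"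
proof -
  have "(\<Prod>k\<in>insert i I. (x(i := t)) k ^ \<beta> k) = t ^ \<beta> i * (\<Prod>k\<in>I. x k ^ \<beta> k)" for \<beta>
  proof -
    have "(\<Prod>k\<in>I. (x(i := t)) k ^ \<beta> k) = (\<Prod>k\<in>I. x k ^ \<beta> k)"
      using assms(2) by (intro prod.cong) auto
    then show ?thesis using assms(1,2) by (simp add: prod.insert del: fun_upd_apply) simp
  qed
  then have "(\<Sum>\<beta>\<in>S. c \<beta> * (\<Prod>k\<in>insert i I. (x(i := t)) k ^ \<beta> k))
      = (\<Sum>\<beta>\<in>S. c \<beta> * (\<Prod>k\<in>I. x k ^ \<beta> k) * t ^ \<beta> i)"
    by (simp add: mult_ac del: fun_upd_apply)
  also have "\<dots> = (\<Sum>n\<in>M. \<Sum>\<beta>\<in>{\<beta>\<in>S. \<beta> i = n}. c \<beta> * (\<Prod>k\<in>I. x k ^ \<beta> k) * t ^ \<beta> i)"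
    using assms(3-5) by (rule sum.group[symmetric])
  also have "\<dots> = (\<Sum>n\<in>M. (\<Sum>\<beta>\<in>{\<beta>\<in>S. \<beta> i = n}. c \<beta> * (\<Prod>k\<in>I. x k ^ \<beta> k)) * t ^ n)"
    by (auto simp: sum_distrib_right intro!: sum.cong)
  finally show ?thesis .
qed

lemma sum_monomials_eq_0_imp_coeffs_eq_0:
  fixes c :: "('d \<Rightarrow> nat) \<Rightarrow> 'a::{idom,real_normed_div_algebra}"
  assumes "finite I" and "finite S"
    and "\<forall>x. (\<Sum>\<beta>\<in>S. c \<beta> * (\<Prod>k\<in>I. x k ^ \<beta> k)) = 0"
  shows "(\<Sum>\<beta>\<in>{\<beta>\<in>S. \<forall>k\<in>I. \<beta> k = \<alpha> k}. c \<beta>) = 0"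
  using assms
proof (induction I arbitrary: S rule: finite_induct)
  case empty
  then show ?case by simp
next
  case (insert i I)
  define S\<^sub>i where "S\<^sub>i = {\<beta>\<in>S. \<beta> i = \<alpha> i}"
  define M where "M = insert (\<alpha> i) ((\<lambda>\<beta>. \<beta> i) ` S)"
  have "\<forall>x. (\<Sum>\<beta>\<in>S\<^sub>i. c \<beta> * (\<Prod>k\<in>I. x k ^ \<beta> k)) = 0"
  proof
    fix x :: "'d \<Rightarrow> 'a"
    have "\<forall>t. (\<Sum>n\<in>M. (\<Sum>\<beta>\<in>{\<beta>\<in>S. \<beta> i = n}. c \<beta> * (\<Prod>k\<in>I. x k ^ \<beta> k)) * t ^ n) = 0"
    proof
      fix t
      show "(\<Sum>n\<in>M. (\<Sum>\<beta>\<in>{\<beta>\<in>S. \<beta> i = n}. c \<beta> * (\<Prod>k\<in>I. x k ^ \<beta> k)) * t ^ n) = 0"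
        using insert.prems(2)[rule_format, of "x(i := t)"] insert.hyps insert.prems(1)
        by (subst sum_monomials_group_by_exponent[symmetric]) (auto simp: M_def)
    qed
    then show "(\<Sum>\<beta>\<in>S\<^sub>i. c \<beta> * (\<Prod>k\<in>I. x k ^ \<beta> k)) = 0"
      using insert.prems(1) unfolding S\<^sub>i_def by (intro polyfun_coeff_eq_0[of M]) (auto simp: M_def)
  qed
  then have "(\<Sum>\<beta>\<in>{\<beta>\<in>S\<^sub>i. \<forall>k\<in>I. \<beta> k = \<alpha> k}. c \<beta>) = 0"
    using insert.IH[of S\<^sub>i] insert.prems(1) by (simp add: S\<^sub>i_def)
  moreover have "{\<beta>\<in>S\<^sub>i. \<forall>k\<in>I. \<beta> k = \<alpha> k} = {\<beta>\<in>S. \<forall>k\<in>insert i I. \<beta> k = \<alpha> k}"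
    by (auto simp: S\<^sub>i_def)
  ultimately show ?case by simp
qed

lemma finite_multi_indices_of_degree: "finite {\<alpha>::'d::finite \<Rightarrow> nat. (\<Sum>i\<in>UNIV. \<alpha> i) = j}"
proof (rule finite_subset)
  show "{\<alpha>::'d \<Rightarrow> nat. (\<Sum>i\<in>UNIV. \<alpha> i) = j} \<subseteq> PiE UNIV (\<lambda>_. {0..j})"
    by (auto simp: PiE_UNIV_domain intro!: member_le_sum)
qed (rule finite_PiE; simp)

lemma ray_coeff_scaleR:
  fixes f :: "('d::finite) mfps"
  shows "ray_coeff f (s *\<^sub>R u) j = s ^ j * ray_coeff f u j"
  unfolding ray_coeff_def sum_distrib_left
proof (rule sum.cong)
  fix \<alpha> :: "'d \<Rightarrow> nat" assume "\<alpha> \<in> {\<alpha>. (\<Sum>i\<in>UNIV. \<alpha> i) = j}"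
  have "(\<Prod>i\<in>UNIV. ((s *\<^sub>R u) $ i) ^ \<alpha> i) = s ^ (\<Sum>i\<in>UNIV. \<alpha> i) * (\<Prod>i\<in>UNIV. (u $ i) ^ \<alpha> i)"
    by (simp add: power_mult_distrib prod.distrib power_sum)
  with \<open>\<alpha> \<in> _\<close> show "f \<alpha> * (\<Prod>i\<in>UNIV. ((s *\<^sub>R u) $ i) ^ \<alpha> i) = s ^ j * (f \<alpha> * (\<Prod>i\<in>UNIV. (u $ i) ^ \<alpha> i))"
    by simp
qed simp

lemma ex_unit_ray_deriv_nonzero:
  fixes f :: "('d::finite) mfps"
  assumes "f \<noteq> (\<lambda>_. 0)"
  shows "\<exists>u j. norm u = 1 \<and> ray_deriv f u j \<noteq> 0"
proof -
  obtain \<alpha> where "f \<alpha> \<noteq> 0" using assms by auto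
  define j where "j = (\<Sum>i\<in>UNIV. \<alpha> i)"
  define S where "S = {\<beta>::'d \<Rightarrow> nat. (\<Sum>i\<in>UNIV. \<beta> i) = j}"
  have "{\<beta>\<in>S. \<forall>i\<in>UNIV. \<beta> i = \<alpha> i} = {\<alpha>}"
    by (auto simp: S_def j_def)
  then obtain x where "(\<Sum>\<beta>\<in>S. f \<beta> * (\<Prod>i\<in>UNIV. x i ^ \<beta> i)) \<noteq> 0"
    using sum_monomials_eq_0_imp_coeffs_eq_0[of UNIV S f \<alpha>] \<open>f \<alpha> \<noteq> 0\<close>
      finite_multi_indices_of_degree[of j]
    by (auto simp: S_def)
  then have v: "ray_coeff f (\<chi> i. x i) j \<noteq> 0"
    by (simp add: ray_coeff_def S_def)
  obtain w :: "real^'d" where "norm w = 1" and w: "(\<chi> i. x i) = norm (\<chi> i. x i) *\<^sub>R w"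
  proof (cases "(\<chi> i. x i) = (0::real^'d)")
    case True
    then show ?thesis using that[of "axis undefined 1"] by simp
  next
    case False
    then show ?thesis using that[of "sgn (\<chi> i. x i)"] by (simp add: norm_sgn sgn_div_norm)
  qed
  have "ray_coeff f w j \<noteq> 0"
    using v by (subst (asm) w) (simp add: ray_coeff_scaleR)
  then have "ray_deriv f w j \<noteq> 0"
    by (simp add: ray_deriv_def)
  with \<open>norm w = 1\<close> show ?thesis by blast
qed

lemma continuous_on_ray_deriv_grad_pair:
  "continuous_on UNIV (\<lambda>\<gamma>. ray_deriv (grad_pair N \<gamma>) u j)"
  unfolding ray_deriv_def ray_coeff_def grad_pair_def
  by (intro continuous_intros)

lemma compact_uniformly_positive_finite_subfamily:
  fixes F :: "'b \<Rightarrow> 'a::topological_space \<Rightarrow> real"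
  assumes "compact U"
    and cont: "\<And>b. b \<in> P \<Longrightarrow> continuous_on UNIV (F b)"
    and pos: "\<And>a. a \<in> U \<Longrightarrow> \<exists>b\<in>P. F b a > 0"
  obtains B \<sigma> where "finite B" "B \<subseteq> P" "\<sigma> > 0" "\<And>a. a \<in> U \<Longrightarrow> \<exists>b\<in>B. F b a \<ge> \<sigma>"
proof -
  obtain b where b: "\<And>a. a \<in> U \<Longrightarrow> b a \<in> P \<and> F (b a) a > 0"
    using pos by metis
  define near where "near c = {a. F (b c) c / 2 < F (b c) a}" for c
  have "open (near c)" if "c \<in> U" for c
    unfolding near_def using b[OF that] cont by (intro open_Collect_less continuous_intros) auto
  moreover have "U \<subseteq> (\<Union>c\<in>U. near c)"
    using b by (auto simp: near_def)
  ultimately obtain C where "C \<subseteq> U" "finite C" and cover: "U \<subseteq> (\<Union>c\<in>C. near c)"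
    by (rule compactE_image[OF \<open>compact U\<close>])
  \<comment> \<open>inserting 1 keeps the minimum well defined and positive when U is empty\<close>
  define \<sigma> where "\<sigma> = Min (insert 1 ((\<lambda>c. F (b c) c / 2) ` C))"
  have "\<sigma> > 0"
    unfolding \<sigma>_def using \<open>finite C\<close> \<open>C \<subseteq> U\<close> b by (subst Min_gr_iff) auto
  moreover have "\<exists>c\<in>b ` C. F c a \<ge> \<sigma>" if "a \<in> U" for a
  proof -
    obtain c where "c \<in> C" and "F (b c) c / 2 < F (b c) a"
      using cover \<open>a \<in> U\<close> by (auto simp: near_def)
    moreover have "\<sigma> \<le> F (b c) c / 2"
      unfolding \<sigma>_def using \<open>finite C\<close> \<open>c \<in> C\<close> by (intro Min_le) auto
    ultimately show ?thesis by (intro bexI[of _ "b c"]) auto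
  qed
  moreover have "b ` C \<subseteq> P" using \<open>C \<subseteq> U\<close> b by auto
  ultimately show ?thesis using \<open>finite C\<close> by (intro that[of "b ` C" \<sigma>]) auto
qed

theorem lemma5p1:
  fixes N :: "('d::finite \<Rightarrow> nat) \<Rightarrow> real"
  assumes nondeg: "\<not> (\<exists>\<gamma>::real^'d. norm \<gamma> = 1 \<and> grad_pair N \<gamma> = (\<lambda>_. 0))"
  shows "\<exists>p::nat. \<exists>\<sigma>::real. \<sigma> > 0 \<and>
           (\<forall>k::int^'d. k \<noteq> 0 \<longrightarrow>
              (\<exists>u::real^'d. norm u = 1 \<and>
                 Max ((\<lambda>j. \<bar>ray_deriv (grad_pair N (sgn (\<chi> i. real_of_int (k $ i)))) u j\<bar>) ` {0..p}) \<ge> \<sigma>))"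
proof -
  define F where "F = (\<lambda>(u, j) \<gamma>. \<bar>ray_deriv (grad_pair N \<gamma>) u j\<bar>)"
  have pos: "\<exists>b\<in>{(u, j). norm u = 1}. F b \<gamma> > 0" if \<gamma>: "\<gamma> \<in> sphere 0 1" for \<gamma> :: "real^'d"
  proof -
    obtain u j where "norm u = 1" "ray_deriv (grad_pair N \<gamma>) u j \<noteq> 0"
      using \<gamma> nondeg ex_unit_ray_deriv_nonzero[of "grad_pair N \<gamma>"] by auto
    then show ?thesis by (intro bexI[of _ "(u, j)"]) (auto simp: F_def)
  qed
  have cont: "continuous_on UNIV (F b)" for b
    unfolding F_def by (cases b) (auto intro!: continuous_intros continuous_on_ray_deriv_grad_pair)
  obtain B \<sigma> where B: "finite B" "B \<subseteq> {(u, j). norm u = 1}" and "\<sigma> > 0"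
    and cover: "\<And>\<gamma>. \<gamma> \<in> sphere 0 1 \<Longrightarrow> \<exists>b\<in>B. F b \<gamma> \<ge> \<sigma>"
    using compact_uniformly_positive_finite_subfamily[OF compact_sphere cont pos] by blast
  define p where "p = Max (snd ` B)"
  have "\<exists>u. norm u = 1 \<and> \<sigma> \<le> Max ((\<lambda>j. \<bar>ray_deriv (grad_pair N \<gamma>) u j\<bar>) ` {0..p})"
    if \<gamma>: "\<gamma> \<in> sphere 0 1" for \<gamma>
  proof -
    obtain u j where "(u, j) \<in> B" and "\<sigma> \<le> \<bar>ray_deriv (grad_pair N \<gamma>) u j\<bar>"
      using cover[OF \<gamma>] by (auto simp: F_def)
    moreover have "j \<le> p" using \<open>(u, j) \<in> B\<close> \<open>finite B\<close> unfolding p_def by (intro Max_ge) force+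
    ultimately show ?thesis using B(2) by (force intro: order_trans Max_ge)
  qed
  moreover have "sgn (\<chi> i. real_of_int (k $ i)) \<in> sphere (0::real^'d) 1" if "k \<noteq> 0" for k :: "int^'d"
    using that by (auto simp: norm_sgn vec_eq_iff)
  ultimately show ?thesis using \<open>\<sigma> > 0\<close> by blast
qed

end
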